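(* The saturation of a finite sample set is finite.
   Context: Fix a countably infinite set of term variables $x,y,z,\dots$ and a countably infinite set of time variables $\kappa,\kappa',\dots$. Basic terms are given by the grammar $t,u::= x\mid tu\mid t^{o}\mid t^{\ell}\mid t^{r}\mid \mathrm{id}\mid\bot$ (purely syntactic). Samples are given by the grammar $\alpha::=\kappa\mid t[\alpha]\mid \mathsf{s}(\alpha)\mid\mathsf{p}(\alpha)\mid\mathsf{last}(t)$, where $\kappa$ ranges over time variables and $t$ over basic terms. Let $\leadsto$ be the relation on samples given by, for all basic terms $t,u$ and samples $\alpha$: $t[\alpha]\leadsto\alpha$; $\mathsf{s}(\alpha)\leadsto\alpha$; $\mathsf{p}(\alpha)\leadsto\alpha$; $(tu)[\alpha]\leadsto t[u[\alpha]]$; $t^{o}[\alpha]\leadsto t[\alpha]$; $t^{r}[\alpha]\leadsto t[t^{r}[\alpha]]$ and $t^{r}[\alpha]\leadsto t[\mathsf{s}(t^{r}[\alpha])]$; $t^{\ell}[\alpha]\leadsto t[t^{\ell}[\alpha]]$ and $t^{\ell}[\alpha]\leadsto t[\mathsf{p}(t^{\ell}[\alpha])]$; $t[\alpha]\leadsto t[\mathsf{last}(t)]$. The saturation of a set $\Delta$ of samples is $\{\beta\mid\exists\alpha\in\Delta,\ \alpha\leadsto^{*}\beta\}$, where $\leadsto^{*}$ is the reflexive transitive closure of $\leadsto$. *)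

theory Defs
  imports Main
begin

datatype bterm =
    Var nat
  | App bterm bterm
  | Op bterm
  | Lft bterm
  | Rgt bterm
  | Id
  | Bot

datatype sample =
    TVar nat
  | Sub bterm sample
  | S sample
  | P sample
  | Last bterm

inductive step :: "sample \<Rightarrow> sample \<Rightarrow> bool" where
  sub_drop: "step (Sub t a) a"
| s_drop: "step (S a) a"
| p_drop: "step (P a) a"
| app: "step (Sub (App t u) a) (Sub t (Sub u a))"
| op: "step (Sub (Op t) a) (Sub t a)"
| rgt1: "step (Sub (Rgt t) a) (Sub t (Sub (Rgt t) a))"
| rgt2: "step (Sub (Rgt t) a) (Sub t (S (Sub (Rgt t) a)))"
| lft1: "step (Sub (Lft t) a) (Sub t (Sub (Lft t) a))"
| lft2: "step (Sub (Lft t) a) (Sub t (P (Sub (Lft t) a)))"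
| last: "step (Sub t a) (Sub t (Last t))"

definition saturation :: "sample set \<Rightarrow> sample set" where
  "saturation D = {b. \<exists>a\<in>D. step\<^sup>*\<^sup>* a b}"

end

theory Submission
  imports Defs
begin

text \<open>Steps only rewrite the outermost frame of a sample, so a sample \<open>t[x]\<close> can reach
  anything below \<open>x\<close> only by first reaching \<open>x\<close> itself. By induction on \<open>t\<close>, every
  \<open>t[x]\<close> lies in a finite set that steps can leave only towards \<open>x\<close>: for \<open>(t u)[x]\<close>
  one combines such sets for \<open>u[x]\<close> and \<open>t[u[x]]\<close>, and for \<open>t\<^sup>r[x]\<close> the cycle
  \<open>t\<^sup>r[x] \<leadsto> t[t\<^sup>r[x]] \<leadsto> t\<^sup>r[x]\<close> stays inside the set built from \<open>t\<^sup>r[x]\<close>,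
  \<open>s(t\<^sup>r[x])\<close> and the sets for \<open>t\<close> over these two samples. Hence the saturation of
  \<open>t[x]\<close> is contained in a finite set together with the saturation of \<open>x\<close>, and
  finiteness follows by induction on samples.\<close>

definition closed_upto :: "sample set \<Rightarrow> sample set \<Rightarrow> bool" where
  "closed_upto A X \<longleftrightarrow> (\<forall>b\<in>A. \<forall>c. step b c \<longrightarrow> c \<in> A \<union> X)"

lemma closed_upto_singleton:
  "closed_upto {b} X \<longleftrightarrow> (\<forall>c. step b c \<longrightarrow> c = b \<or> c \<in> X)"
  by (auto simp: closed_upto_def)

lemma closed_upto_Un:
  "closed_upto A X \<Longrightarrow> closed_upto B Y \<Longrightarrow> closed_upto (A \<union> B) (X \<union> Y)"
  by (auto simp: closed_upto_def)

lemma closed_upto_exits_subset: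
  "closed_upto A X \<Longrightarrow> X \<subseteq> A \<union> Y \<Longrightarrow> closed_upto A Y"
  by (auto simp: closed_upto_def)

lemma closed_upto_saturation: "closed_upto (saturation D) {}"
  by (auto simp: closed_upto_def saturation_def intro: rtranclp.rtrancl_into_rtrancl)

lemma subset_saturation: "D \<subseteq> saturation D"
  by (auto simp: saturation_def)

lemma saturation_eq_UN: "saturation D = (\<Union>a\<in>D. saturation {a})"
  by (auto simp: saturation_def)

lemma saturation_singleton_subset:
  assumes "closed_upto A {}" and "a \<in> A"
  shows "saturation {a} \<subseteq> A"
proof
  fix b
  assume "b \<in> saturation {a}"
  then have "step\<^sup>*\<^sup>* a b"
    by (simp add: saturation_def)
  then show "b \<in> A"
    using assms(2) by induction (use assms(1) in \<open>auto simp: closed_upto_def\<close>)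
qed

lemma finite_saturation_singleton_if_closed_upto:
  assumes "closed_upto A X" and "finite A" and "b \<in> A" and "finite (saturation X)"
  shows "finite (saturation {b})"
proof -
  have "closed_upto (A \<union> saturation X) (X \<union> {})"
    using assms(1) closed_upto_saturation by (rule closed_upto_Un)
  then have "closed_upto (A \<union> saturation X) {}"
    by (rule closed_upto_exits_subset) (use subset_saturation in blast)
  then have "saturation {b} \<subseteq> A \<union> saturation X"
    using assms(3) by (intro saturation_singleton_subset) auto
  then show ?thesis
    using assms(2,4) by (meson finite_UnI finite_subset)
qed

text \<open>Besides returning to \<open>x\<close>, the only way out of the set built around \<open>Sub t x\<close> is
  the rule \<open>last\<close>; its target \<open>Sub t (Last t)\<close> admits a set of the same kind, whose other
  exit \<open>Last t\<close> is a dead end.\<close>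

lemma finite_closed_upto_of_last:
  assumes "\<And>y. \<exists>A. finite A \<and> Sub t y \<in> A \<and> closed_upto A {y, Sub t (Last t)}"
  shows "\<exists>A. finite A \<and> Sub t x \<in> A \<and> closed_upto A {x}"
proof -
  obtain A where A: "finite A" "Sub t x \<in> A" "closed_upto A {x, Sub t (Last t)}"
    using assms by blast
  obtain B where B: "finite B" "Sub t (Last t) \<in> B" "closed_upto B {Last t, Sub t (Last t)}"
    using assms by blast
  have "closed_upto {Last t} {}"
    by (auto simp: closed_upto_singleton elim: step.cases)
  then have "closed_upto (A \<union> B \<union> {Last t}) ({x, Sub t (Last t)} \<union> {Last t, Sub t (Last t)} \<union> {})"
    using A(3) B(3) by (intro closed_upto_Un)
  then have "closed_upto (A \<union> B \<union> {Last t}) {x}"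
    by (rule closed_upto_exits_subset) (use B(2) in auto)
  with A(1,2) B(1) show ?thesis
    by (intro exI[of _ "A \<union> B \<union> {Last t}"]) simp
qed

lemma finite_closed_upto_around_Sub:
  "\<exists>A. finite A \<and> Sub t x \<in> A \<and> closed_upto A {x}"
proof (induction t arbitrary: x)
  case (Var n)
  show ?case
    by (rule finite_closed_upto_of_last, rule exI[of _ "{Sub (Var n) _}"])
      (auto simp: closed_upto_singleton elim: step.cases)
next
  case Id
  show ?case
    by (rule finite_closed_upto_of_last, rule exI[of _ "{Sub Id _}"])
      (auto simp: closed_upto_singleton elim: step.cases)
next
  case Bot
  show ?case
    by (rule finite_closed_upto_of_last, rule exI[of _ "{Sub Bot _}"])
      (auto simp: closed_upto_singleton elim: step.cases)
next
  case (Op t)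
  show ?case
  proof (rule finite_closed_upto_of_last)
    fix y
    obtain A where A: "finite A" "Sub t y \<in> A" "closed_upto A {y}"
      using Op.IH by blast
    have "closed_upto {Sub (Op t) y} {y, Sub t y, Sub (Op t) (Last (Op t))}"
      by (auto simp: closed_upto_singleton elim: step.cases)
    from closed_upto_Un[OF this A(3)]
    have "closed_upto ({Sub (Op t) y} \<union> A) {y, Sub (Op t) (Last (Op t))}"
      by (rule closed_upto_exits_subset) (use A(2) in auto)
    with A(1) show "\<exists>A. finite A \<and> Sub (Op t) y \<in> A \<and> closed_upto A {y, Sub (Op t) (Last (Op t))}"
      by (intro exI[of _ "{Sub (Op t) y} \<union> A"]) simp
  qed
next
  case (App t u)
  show ?case
  proof (rule finite_closed_upto_of_last)
    fix y
    obtain B where B: "finite B" "Sub u y \<in> B" "closed_upto B {y}"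
      using App.IH(2) by blast
    obtain A where A: "finite A" "Sub t (Sub u y) \<in> A" "closed_upto A {Sub u y}"
      using App.IH(1) by blast
    have "closed_upto {Sub (App t u) y} {y, Sub t (Sub u y), Sub (App t u) (Last (App t u))}"
      by (auto simp: closed_upto_singleton elim: step.cases)
    from closed_upto_Un[OF closed_upto_Un[OF this A(3)] B(3)]
    have "closed_upto ({Sub (App t u) y} \<union> A \<union> B) {y, Sub (App t u) (Last (App t u))}"
      by (rule closed_upto_exits_subset) (use A(2) B(2) in auto)
    with A(1) B(1) show "\<exists>A. finite A \<and> Sub (App t u) y \<in> A \<and>
        closed_upto A {y, Sub (App t u) (Last (App t u))}"
      by (intro exI[of _ "{Sub (App t u) y} \<union> A \<union> B"]) simp
  qed
next
  case (Rgt t)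
  show ?case
  proof (rule finite_closed_upto_of_last)
    fix y
    let ?a = "Sub (Rgt t) y"
    obtain A where A: "finite A" "Sub t ?a \<in> A" "closed_upto A {?a}"
      using Rgt.IH by blast
    obtain B where B: "finite B" "Sub t (S ?a) \<in> B" "closed_upto B {S ?a}"
      using Rgt.IH by blast
    have "closed_upto {?a, S ?a} {y, Sub t ?a, Sub t (S ?a), Sub (Rgt t) (Last (Rgt t))}"
      by (auto simp: closed_upto_def elim: step.cases)
    from closed_upto_Un[OF closed_upto_Un[OF this A(3)] B(3)]
    have "closed_upto ({?a, S ?a} \<union> A \<union> B) {y, Sub (Rgt t) (Last (Rgt t))}"
      by (rule closed_upto_exits_subset) (use A(2) B(2) in auto)
    with A(1) B(1) show "\<exists>A. finite A \<and> ?a \<in> A \<and> closed_upto A {y, Sub (Rgt t) (Last (Rgt t))}"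
      by (intro exI[of _ "{?a, S ?a} \<union> A \<union> B"]) simp
  qed
next
  case (Lft t)
  show ?case
  proof (rule finite_closed_upto_of_last)
    fix y
    let ?a = "Sub (Lft t) y"
    obtain A where A: "finite A" "Sub t ?a \<in> A" "closed_upto A {?a}"
      using Lft.IH by blast
    obtain B where B: "finite B" "Sub t (P ?a) \<in> B" "closed_upto B {P ?a}"
      using Lft.IH by blast
    have "closed_upto {?a, P ?a} {y, Sub t ?a, Sub t (P ?a), Sub (Lft t) (Last (Lft t))}"
      by (auto simp: closed_upto_def elim: step.cases)
    from closed_upto_Un[OF closed_upto_Un[OF this A(3)] B(3)]
    have "closed_upto ({?a, P ?a} \<union> A \<union> B) {y, Sub (Lft t) (Last (Lft t))}"
      by (rule closed_upto_exits_subset) (use A(2) B(2) in auto)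
    with A(1) B(1) show "\<exists>A. finite A \<and> ?a \<in> A \<and> closed_upto A {y, Sub (Lft t) (Last (Lft t))}"
      by (intro exI[of _ "{?a, P ?a} \<union> A \<union> B"]) simp
  qed
qed

lemma finite_saturation_singleton: "finite (saturation {a})"
proof (induction a)
  case (TVar n)
  have "closed_upto {TVar n} {}"
    by (auto simp: closed_upto_singleton elim: step.cases)
  then show ?case
    by (rule finite_saturation_singleton_if_closed_upto) (auto simp: saturation_def)
next
  case (Sub t a)
  obtain A where "finite A" "Sub t a \<in> A" "closed_upto A {a}"
    using finite_closed_upto_around_Sub by blast
  with finite_saturation_singleton_if_closed_upto Sub.IH show ?case
    by blast
next
  case (S a)
  have "closed_upto {S a} {a}"
    by (auto simp: closed_upto_singleton elim: step.cases)
  from finite_saturation_singleton_if_closed_upto[OF this _ _ S.IH] show ?case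
    by simp
next
  case (P a)
  have "closed_upto {P a} {a}"
    by (auto simp: closed_upto_singleton elim: step.cases)
  from finite_saturation_singleton_if_closed_upto[OF this _ _ P.IH] show ?case
    by simp
next
  case (Last t)
  have "closed_upto {Last t} {}"
    by (auto simp: closed_upto_singleton elim: step.cases)
  then show ?case
    by (rule finite_saturation_singleton_if_closed_upto) (auto simp: saturation_def)
qed

theorem lemma3p5:
  assumes "finite D"
  shows "finite (saturation D)"
  unfolding saturation_eq_UN[of D] using assms finite_saturation_singleton by blast

end
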